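(* Let $\mathcal B^L_\Omega,\mathcal B^P_\Omega>0$ be constants such that $\|P_{L'}^*-P_L^*\|\le\mathcal B^P_\Omega\|L'-L\|$ whenever $L,L'\in\Omega$ and $\|L'-L\|\le\mathcal B^L_\Omega$ (such constants exist under the standing assumptions), and assume $B\ne0$, $C\ne0$. For any $L,L'\in\Omega$ with $$\|L'-L\|\le\min\Big\{\mathcal B^L_\Omega,\ \frac{\|B\|(\mathcal B^P_\Omega\|\tilde A_L-BK(L)\|+\|P_L^*\|\|C\|)}{\mathcal B^P_\Omega\|B\|\|C\|}\Big\},$$ it holds that $\|K(L')-K(L)\|\le\dfrac{2\|B\|(\mathcal B^P_\Omega\|\tilde A_L-BK(L)\|+\|P_L^*\|\|C\|)}{\sigma_{\min}(R^u)}\|L'-L\|$.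
   Context: Zero-sum LQ game: $A\in\mathbb R^{d\times d}$, $B\in\mathbb R^{d\times m_1}$, $C\in\mathbb R^{d\times m_2}$, symmetric positive definite $Q,R^u,R^v$. For $L$ with $Q-L^\top R^vL\succ0$: $\tilde A_L=A-CL$, $P_L^*\succ0$ is the stabilizing solution of $P=Q-L^\top R^vL+\tilde A_L^\top P\tilde A_L-\tilde A_L^\top PB(R^u+B^\top PB)^{-1}B^\top P\tilde A_L$, and $K(L)=(R^u+B^\top P_L^*B)^{-1}B^\top P_L^*\tilde A_L$. Standing assumptions: $\mathbb E[x_0x_0^\top]\succ0$; the GARE $P=A^\top PA+Q-[A^\top PB\ \ A^\top PC]\begin{bmatrix}R^u+B^\top PB & B^\top PC\\ C^\top PB & -R^v+C^\top PC\end{bmatrix}^{-1}\begin{bmatrix}B^\top PA\\ C^\top PA\end{bmatrix}$ has a minimal positive definite solution $P^*$ with $R^v-C^\top P^*C\succ0$, and $Q-(L^* )^\top R^vL^*\succ0$ for $L^*=[-R^v+C^\top P^*C-C^\top P^*B(R^u+B^\top P^*B)^{-1}B^\top P^*C]^{-1}[C^\top P^*A-C^\top P^*B(R^u+B^\top P^*B)^{-1}B^\top P^*A]$. $0<\zeta<\sigma_{\min}(Q-(L^* )^\top R^vL^* )$, $\Omega=\{L:Q-L^\top R^vL\succeq\zeta I\}$. $\|\cdot\|$ is the spectral norm. *)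

theory Defs
  imports "HOL-Analysis.Analysis"
begin

text \<open>Matrices are Cartesian-product matrices real^'c^'r (r rows, c columns).\<close>

definition mnorm :: "real^'c^'r \<Rightarrow> real" where
  "mnorm M = onorm (\<lambda>x. M *v x)"

definition sigma_min :: "real^'n^'n \<Rightarrow> real" where
  "sigma_min M = Inf {norm (M *v x) | x. norm x = 1}"

definition symm :: "real^'n^'n \<Rightarrow> bool" where
  "symm M \<longleftrightarrow> transpose M = M"

definition posdef :: "real^'n^'n \<Rightarrow> bool" where
  "posdef M \<longleftrightarrow> symm M \<and> (\<forall>x. x \<noteq> 0 \<longrightarrow> x \<bullet> (M *v x) > 0)"

definition psd :: "real^'n^'n \<Rightarrow> bool" where
  "psd M \<longleftrightarrow> symm M \<and> (\<forall>x. x \<bullet> (M *v x) \<ge> 0)"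

definition cmat :: "real^'n^'n \<Rightarrow> complex^'n^'n" where
  "cmat M = (\<chi> i j. complex_of_real (M $ i $ j))"

definition schur_stable :: "real^'n^'n \<Rightarrow> bool" where
  "schur_stable M \<longleftrightarrow>
     (\<forall>(c::complex) (v::complex^'n). v \<noteq> 0 \<and> cmat M *v v = c *s v \<longrightarrow> cmod c < 1)"

definition hcat :: "real^'a^'d \<Rightarrow> real^'b^'d \<Rightarrow> real^('a + 'b)^'d" where
  "hcat X Y = (\<chi> i j. case j of Inl b \<Rightarrow> X $ i $ b | Inr b \<Rightarrow> Y $ i $ b)"

definition vcat :: "real^'d^'a \<Rightarrow> real^'d^'b \<Rightarrow> real^'d^('a + 'b)" where
  "vcat X Y = (\<chi> i j. case i of Inl a \<Rightarrow> X $ a $ j | Inr a \<Rightarrow> Y $ a $ j)"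

definition blk :: "real^'a^'a \<Rightarrow> real^'b^'a \<Rightarrow> real^'a^'b \<Rightarrow> real^'b^'b \<Rightarrow> real^('a + 'b)^('a + 'b)" where
  "blk M11 M12 M21 M22 = (\<chi> i j. case i of
      Inl a \<Rightarrow> (case j of Inl b \<Rightarrow> M11 $ a $ b | Inr b \<Rightarrow> M12 $ a $ b)
    | Inr a \<Rightarrow> (case j of Inl b \<Rightarrow> M21 $ a $ b | Inr b \<Rightarrow> M22 $ a $ b))"

definition gare ::
  "real^'d^'d \<Rightarrow> real^'m1^'d \<Rightarrow> real^'m2^'d \<Rightarrow> real^'d^'d \<Rightarrow> real^'m1^'m1 \<Rightarrow> real^'m2^'m2 \<Rightarrow> real^'d^'d \<Rightarrow> bool" where
  "gare A B C Q Ru Rv P \<longleftrightarrow>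
     P = transpose A ** P ** A + Q
         - hcat (transpose A ** P ** B) (transpose A ** P ** C)
           ** matrix_inv (blk (Ru + transpose B ** P ** B) (transpose B ** P ** C)
                              (transpose C ** P ** B) (- Rv + transpose C ** P ** C))
           ** vcat (transpose B ** P ** A) (transpose C ** P ** A)"

definition gare_min_pd_sol where
  "gare_min_pd_sol A B C Q Ru Rv P \<longleftrightarrow>
     posdef P \<and> gare A B C Q Ru Rv P \<and>
     (\<forall>P'. posdef P' \<and> gare A B C Q Ru Rv P' \<longrightarrow> psd (P' - P))"

definition Lstar ::
  "real^'d^'d \<Rightarrow> real^'m1^'d \<Rightarrow> real^'m2^'d \<Rightarrow> real^'m1^'m1 \<Rightarrow> real^'m2^'m2 \<Rightarrow> real^'d^'d \<Rightarrow> real^'d^'m2" where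
  "Lstar A B C Ru Rv P =
     matrix_inv (- Rv + transpose C ** P ** C
                 - transpose C ** P ** B ** matrix_inv (Ru + transpose B ** P ** B) ** transpose B ** P ** C)
     ** (transpose C ** P ** A
         - transpose C ** P ** B ** matrix_inv (Ru + transpose B ** P ** B) ** transpose B ** P ** A)"

definition Atil :: "real^'d^'d \<Rightarrow> real^'m2^'d \<Rightarrow> real^'d^'m2 \<Rightarrow> real^'d^'d" where
  "Atil A C L = A - C ** L"

text \<open>K(L) computed from a given P (to be applied with P = P_L^*).\<close>
definition Kgain ::
  "real^'d^'d \<Rightarrow> real^'m1^'d \<Rightarrow> real^'m2^'d \<Rightarrow> real^'m1^'m1 \<Rightarrow> real^'d^'d \<Rightarrow> real^'d^'m2 \<Rightarrow> real^'d^'m1" where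
  "Kgain A B C Ru P L = matrix_inv (Ru + transpose B ** P ** B) ** transpose B ** P ** Atil A C L"

definition riccati_L where
  "riccati_L A B C Q Ru Rv L P \<longleftrightarrow>
     P = Q - transpose L ** Rv ** L + transpose (Atil A C L) ** P ** Atil A C L
         - transpose (Atil A C L) ** P ** B ** matrix_inv (Ru + transpose B ** P ** B)
           ** transpose B ** P ** Atil A C L"

definition stab_sol_L where
  "stab_sol_L A B C Q Ru Rv L P \<longleftrightarrow>
     posdef P \<and> riccati_L A B C Q Ru Rv L P \<and>
     schur_stable (Atil A C L - B ** Kgain A B C Ru P L)"

definition Omega where
  "Omega Q Rv \<zeta> = {L. psd (Q - transpose L ** Rv ** L - \<zeta> *\<^sub>R mat 1)}"

end

theory Submission
  imports Defs
begin

text \<open>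
  Write \<open>M = Ru + B\<^sup>T P B\<close> and \<open>M' = Ru + B\<^sup>T P' B\<close> with \<open>P = P*(L)\<close>, \<open>P' = P*(L')\<close>.
  Since \<open>M K(L) = B\<^sup>T P Atil(L)\<close>, subtracting the two such relations gives the exact identity
  \<open>M' (K(L') - K(L)) = B\<^sup>T (P' - P) (Atil(L) - B K(L)) - B\<^sup>T P' C (L' - L)\<close>.
  As \<open>B\<^sup>T P' B\<close> is positive semidefinite, \<open>|M' x| \<ge> \<sigma>_min(Ru) |x|\<close>, so \<open>\<sigma>_min(Ru) \<parallel>K(L') - K(L)\<parallel>\<close>
  is bounded by the norm of the right-hand side. The Lipschitz bound on \<open>P*\<close> controls \<open>\<parallel>P' - P\<parallel>\<close> and
  \<open>\<parallel>P'\<parallel>\<close>, and the smallness of \<open>\<parallel>L' - L\<parallel>\<close> absorbs the resulting quadratic term into the linear one,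
  at the cost of the factor 2.
\<close>

lemma mnorm_nonneg: "0 \<le> mnorm M"
  unfolding mnorm_def by (intro onorm_pos_le) simp

lemma norm_matrix_vector_le: "norm (M *v x) \<le> mnorm M * norm x"
  unfolding mnorm_def by (intro onorm) simp

lemma mnorm_leI: "(\<And>x. norm ((M::real^'c^'r) *v x) \<le> b * norm x) \<Longrightarrow> mnorm M \<le> b"
  unfolding mnorm_def by (rule onorm_le)

lemma mnorm_pos: "(M::real^'c^'r) \<noteq> 0 \<Longrightarrow> 0 < mnorm M"
  unfolding mnorm_def by (subst onorm_pos_lt) (simp_all add: matrix_eq)

lemma mnorm_mult_le: "mnorm ((M::real^'b^'a) ** (N::real^'c^'b)) \<le> mnorm M * mnorm N"
proof (rule mnorm_leI)
  fix x
  have "norm ((M ** N) *v x) = norm (M *v (N *v x))" by (simp add: matrix_vector_mul_assoc)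
  also have "\<dots> \<le> mnorm M * norm (N *v x)" by (rule norm_matrix_vector_le)
  also have "\<dots> \<le> mnorm M * (mnorm N * norm x)"
    by (rule mult_left_mono[OF norm_matrix_vector_le mnorm_nonneg])
  finally show "norm ((M ** N) *v x) \<le> mnorm M * mnorm N * norm x" by simp
qed

lemma mnorm_mult3_le:
  "mnorm ((M::real^'b^'a) ** (N::real^'c^'b) ** (R::real^'e^'c)) \<le> mnorm M * mnorm N * mnorm R"
  by (rule order_trans[OF mnorm_mult_le mult_right_mono[OF mnorm_mult_le mnorm_nonneg]])

lemma mnorm_add_le: "mnorm ((M::real^'c^'r) + N) \<le> mnorm M + mnorm N"
proof (rule mnorm_leI)
  fix x
  have "norm ((M + N) *v x) \<le> norm (M *v x) + norm (N *v x)"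
    by (simp add: matrix_vector_mult_add_rdistrib norm_triangle_ineq)
  also have "\<dots> \<le> (mnorm M + mnorm N) * norm x"
    using norm_matrix_vector_le[of M x] norm_matrix_vector_le[of N x] by (simp add: algebra_simps)
  finally show "norm ((M + N) *v x) \<le> (mnorm M + mnorm N) * norm x" .
qed

lemma mnorm_diff_le: "mnorm ((M::real^'c^'r) - N) \<le> mnorm M + mnorm N"
proof (rule mnorm_leI)
  fix x
  have "norm ((M - N) *v x) \<le> norm (M *v x) + norm (N *v x)"
    by (simp add: matrix_vector_mult_diff_rdistrib norm_triangle_ineq4)
  also have "\<dots> \<le> (mnorm M + mnorm N) * norm x"
    using norm_matrix_vector_le[of M x] norm_matrix_vector_le[of N x] by (simp add: algebra_simps)
  finally show "norm ((M - N) *v x) \<le> (mnorm M + mnorm N) * norm x" .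
qed

lemma inner_matrix_vector_transpose: "(x::real^'r) \<bullet> ((M::real^'c^'r) *v y) = (transpose M *v x) \<bullet> y"
  by (simp add: dot_lmul_matrix)

lemma mnorm_transpose_le: "mnorm (transpose (M::real^'c^'r)) \<le> mnorm M"
proof (rule mnorm_leI)
  fix x :: "real^'r"
  let ?y = "transpose M *v x"
  have "norm ?y ^ 2 = x \<bullet> (M *v ?y)"
    by (simp add: inner_matrix_vector_transpose power2_norm_eq_inner)
  also have "\<dots> \<le> norm x * norm (M *v ?y)" by (rule Cauchy_Schwarz_ineq2[THEN order_trans[OF abs_ge_self]])
  also have "\<dots> \<le> norm x * (mnorm M * norm ?y)"
    by (rule mult_left_mono[OF norm_matrix_vector_le norm_ge_zero])
  finally have "norm ?y * norm ?y \<le> (mnorm M * norm x) * norm ?y"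
    by (simp add: power2_eq_square algebra_simps)
  then show "norm ?y \<le> mnorm M * norm x"
    using mnorm_nonneg[of M] by (cases "norm ?y = 0") (simp_all add: mult_le_cancel_right)
qed

lemma mnorm_transpose: "mnorm (transpose (M::real^'c^'r)) = mnorm M"
  using mnorm_transpose_le[of M] mnorm_transpose_le[of "transpose M"] by simp

lemma matrix_add_rdistrib: "((A::'a::semiring_1^'n^'m) + B) ** C = A ** C + B ** C"
  by (simp add: matrix_matrix_mult_def vec_eq_iff distrib_right sum.distrib)

lemma matrix_diff_rdistrib: "((A::'a::ring_1^'n^'m) - B) ** C = A ** C - B ** C"
  by (simp add: matrix_matrix_mult_def vec_eq_iff left_diff_distrib sum_subtractf)

lemma matrix_diff_ldistrib: "(A::'a::ring_1^'n^'m) ** (B - C) = A ** B - A ** C"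
  by (simp add: matrix_matrix_mult_def vec_eq_iff right_diff_distrib sum_subtractf)

lemma invertible_mult_matrix_inv: "invertible (M::real^'n^'n) \<Longrightarrow> M ** matrix_inv M = mat 1"
  unfolding invertible_def matrix_inv_def by (rule someI_ex[THEN conjunct1])

lemma invertible_if_bounded_below:
  assumes "0 < c" and "\<And>x. c * norm x \<le> norm ((M::real^'n^'n) *v x)"
  shows "invertible M"
proof -
  have "x = 0" if "M *v x = 0" for x
    using assms(2)[of x] that assms(1) by (simp add: mult_le_0_iff)
  then show ?thesis using matrix_left_invertible_ker invertible_left_inverse by blast
qed

lemma mnorm_le_mnorm_mult_divide:
  assumes "0 < c" and "\<And>x. c * norm x \<le> norm ((M::real^'m^'n) *v x)"
  shows "mnorm (X::real^'k^'m) \<le> mnorm (M ** X) / c"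
proof (rule mnorm_leI)
  fix x
  have "c * norm (X *v x) \<le> mnorm (M ** X) * norm x"
    using assms(2)[of "X *v x"] norm_matrix_vector_le[of "M ** X" x]
    by (simp add: matrix_vector_mul_assoc)
  then show "norm (X *v x) \<le> mnorm (M ** X) / c * norm x"
    using assms(1) by (simp add: pos_le_divide_eq mult.commute)
qed

lemma symm_inner_matrix_vector_commute:
  fixes S :: "real^'n^'n"
  assumes "symm S"
  shows "x \<bullet> (S *v y) = y \<bullet> (S *v x)"
proof -
  have "x \<bullet> (S *v y) = (transpose S *v x) \<bullet> y" by (rule inner_matrix_vector_transpose)
  also have "\<dots> = y \<bullet> (S *v x)" using assms unfolding symm_def by (simp add: inner_commute)
  finally show ?thesis .
qed

lemma nonneg_quadratic_imp_linear_coeff_zero: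
  assumes "\<And>e::real. 0 \<le> 2 * e * a + e * e * b"
  shows "a = 0"
proof -
  define c where "c = \<bar>b\<bar> + 1"
  have c: "0 < c" "b \<le> c" unfolding c_def by auto
  have "0 \<le> c * (2 * (-a/c) * a + (-a/c) * (-a/c) * b)"
    using assms[of "-a/c"] c(1) by simp
  also have "\<dots> = -2 * a * a + a * a * b / c"
    using c(1) by (simp add: field_simps)
  also have "a * a * b / c \<le> a * a"
    using c by (simp add: divide_le_eq mult_left_mono)
  finally have "a * a \<le> 0" by linarith
  then show "a = 0" by (metis mult_le_0_iff order_antisym_conv)
qed

lemma min_quadratic_form_eigenvector:
  fixes S :: "real^'n^'n"
  assumes "symm S" and min: "\<And>x. l * norm x ^ 2 \<le> x \<bullet> (S *v x)"
    and x0: "norm x0 = 1" "x0 \<bullet> (S *v x0) = l"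
  shows "S *v x0 = l *\<^sub>R x0"
proof -
  have "y \<bullet> (S *v x0 - l *\<^sub>R x0) = 0" for y
  proof (rule nonneg_quadratic_imp_linear_coeff_zero)
    fix e :: real
    have "0 \<le> (x0 + e *\<^sub>R y) \<bullet> (S *v (x0 + e *\<^sub>R y)) - l * norm (x0 + e *\<^sub>R y) ^ 2"
      using min[of "x0 + e *\<^sub>R y"] by simp
    also have "(x0 + e *\<^sub>R y) \<bullet> (S *v (x0 + e *\<^sub>R y))
        = l + 2 * e * (y \<bullet> (S *v x0)) + e * e * (y \<bullet> (S *v y))"
      using symm_inner_matrix_vector_commute[OF \<open>symm S\<close>, of x0 y] x0(2)
      by (simp add: matrix_vector_right_distrib matrix_vector_mult_scaleR inner_add_left inner_add_right algebra_simps)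
    also have "norm (x0 + e *\<^sub>R y) ^ 2 = 1 + 2 * e * (y \<bullet> x0) + e * e * norm y ^ 2"
      using x0(1) dot_square_norm[of x0]
      by (simp add: power2_norm_eq_inner inner_add_left inner_add_right inner_commute algebra_simps)
    finally show "0 \<le> 2 * e * (y \<bullet> (S *v x0 - l *\<^sub>R x0)) + e * e * (y \<bullet> (S *v y) - l * norm y ^ 2)"
      by (simp add: inner_diff_right algebra_simps)
  qed
  from this[of "S *v x0 - l *\<^sub>R x0"] show ?thesis by simp
qed

lemma posdef_min_eigenvalue:
  fixes S :: "real^'n^'n"
  assumes "posdef S"
  obtains l x0 where "0 < l" "norm x0 = 1" "S *v x0 = l *\<^sub>R x0"
    "\<And>x. l * norm x ^ 2 \<le> x \<bullet> (S *v x)"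
proof -
  define f where "f x = x \<bullet> (S *v x)" for x :: "real^'n"
  have "continuous_on (sphere 0 1) f"
    unfolding f_def by (intro continuous_intros linear_continuous_on) simp
  then obtain x0 where x0: "norm x0 = 1" and min_x0: "\<And>y. norm y = 1 \<Longrightarrow> f x0 \<le> f y"
    using continuous_attains_inf[OF compact_sphere, of 0 1] by fastforce
  define l where "l = f x0"
  have "0 < l"
    using x0 assms unfolding l_def f_def posdef_def by (metis norm_zero zero_neq_one)
  have min: "l * norm x ^ 2 \<le> x \<bullet> (S *v x)" for x
  proof (cases "x = 0")
    case False
    have "l \<le> f ((1 / norm x) *\<^sub>R x)"
      unfolding l_def using False by (intro min_x0) simp
    also have "\<dots> = f x / norm x ^ 2"
      unfolding f_def by (simp add: matrix_vector_mult_scaleR power2_eq_square)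
    finally show ?thesis using False by (simp add: field_simps f_def)
  qed simp
  have "S *v x0 = l *\<^sub>R x0"
    using assms min x0 unfolding posdef_def l_def f_def
    by (intro min_quadratic_form_eigenvector) auto
  with \<open>0 < l\<close> x0 min show ?thesis by (intro that)
qed

text \<open>\<open>sigma_min\<close> of a positive definite matrix is its least eigenvalue.\<close>

lemma posdef_sigma_min:
  fixes S :: "real^'n^'n"
  assumes "posdef S"
  shows "0 < sigma_min S" and "sigma_min S * norm x ^ 2 \<le> x \<bullet> (S *v x)"
proof -
  obtain l x0 where l: "0 < l" "norm x0 = 1" "S *v x0 = l *\<^sub>R x0"
    and min: "\<And>x. l * norm x ^ 2 \<le> x \<bullet> (S *v x)"
    using posdef_min_eigenvalue[OF assms] by blast
  let ?V = "{norm (S *v x) | x. norm x = 1}"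
  have "sigma_min S \<le> norm (S *v x0)"
    unfolding sigma_min_def using l(2) by (intro cInf_lower) (auto intro: bdd_belowI[of _ 0])
  also have "\<dots> = l" using l by simp
  finally have "sigma_min S \<le> l" .
  moreover have "l \<le> sigma_min S"
    unfolding sigma_min_def
  proof (rule cInf_greatest)
    show "?V \<noteq> {}" using l(2) by blast
  next
    fix v assume "v \<in> ?V"
    then obtain x where x: "norm x = 1" "v = norm (S *v x)" by blast
    have "l \<le> x \<bullet> (S *v x)" using min[of x] x by simp
    also have "\<dots> \<le> norm x * norm (S *v x)"
      by (rule Cauchy_Schwarz_ineq2[THEN order_trans[OF abs_ge_self]])
    finally show "l \<le> v" using x by simp
  qed
  ultimately have "sigma_min S = l" by simp
  then show "0 < sigma_min S" and "sigma_min S * norm x ^ 2 \<le> x \<bullet> (S *v x)"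
    using l(1) min by simp_all
qed

lemma gain_matrix_bounded_below:
  fixes Ru :: "real^'m^'m" and B :: "real^'m^'d"
  assumes "posdef Ru" and "psd P"
  shows "sigma_min Ru * norm x \<le> norm ((Ru + transpose B ** P ** B) *v x)"
proof -
  let ?M = "Ru + transpose B ** P ** B"
  have "x \<bullet> ((transpose B ** P ** B) *v x) = (B *v x) \<bullet> (P *v (B *v x))"
    using inner_matrix_vector_transpose[of x "transpose B" "P *v (B *v x)"]
    by (simp add: matrix_vector_mul_assoc matrix_mul_assoc)
  also have "\<dots> \<ge> 0" using \<open>psd P\<close> by (simp add: psd_def)
  finally have "sigma_min Ru * norm x ^ 2 \<le> x \<bullet> (?M *v x)"
    using posdef_sigma_min(2)[OF \<open>posdef Ru\<close>, of x]
    by (simp add: matrix_vector_mult_add_rdistrib inner_add_right)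
  also have "\<dots> \<le> norm x * norm (?M *v x)"
    by (rule Cauchy_Schwarz_ineq2[THEN order_trans[OF abs_ge_self]])
  finally have "(sigma_min Ru * norm x) * norm x \<le> norm (?M *v x) * norm x"
    by (simp add: power2_eq_square algebra_simps)
  then show ?thesis by (cases "x = 0") simp_all
qed

lemma posdef_imp_psd: "posdef M \<Longrightarrow> psd M"
  unfolding posdef_def psd_def
proof (intro conjI allI; elim conjE)
  fix x assume "\<forall>x. x \<noteq> 0 \<longrightarrow> 0 < x \<bullet> (M *v x)"
  then show "0 \<le> x \<bullet> (M *v x)" by (cases "x = 0") (auto intro: less_imp_le)
qed

lemma gain_matrix_mult_Kgain:
  assumes "invertible (Ru + transpose B ** P ** B)"
  shows "(Ru + transpose B ** P ** B) ** Kgain A B C Ru P L = transpose B ** P ** Atil A C L"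
  unfolding Kgain_def by (simp add: matrix_mul_assoc invertible_mult_matrix_inv[OF assms])

lemma Kgain_difference_identity:
  fixes B :: "real^'m^'d" and C :: "real^'c^'d" and Ru :: "real^'m^'m"
  assumes "invertible (Ru + transpose B ** P ** B)" and "invertible (Ru + transpose B ** P' ** B)"
  shows "(Ru + transpose B ** P' ** B) ** (Kgain A B C Ru P' L' - Kgain A B C Ru P L)
       = transpose B ** (P' - P) ** (Atil A C L - B ** Kgain A B C Ru P L)
         - transpose B ** P' ** C ** (L' - L)"
proof -
  define Bt where "Bt = transpose B"
  define K where "K = Kgain A B C Ru P L"
  have RuK: "Ru ** K = Bt ** P ** Atil A C L - Bt ** P ** B ** K"
    using gain_matrix_mult_Kgain[OF assms(1), of A C L] unfolding K_def[symmetric] Bt_def[symmetric]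
    by (simp add: matrix_add_rdistrib eq_diff_eq)
  have Atil': "Atil A C L' = Atil A C L - C ** (L' - L)"
    unfolding Atil_def by (simp add: matrix_diff_ldistrib)
  have "(Ru + Bt ** P' ** B) ** (Kgain A B C Ru P' L' - K)
      = Bt ** P' ** Atil A C L' - Ru ** K - Bt ** P' ** B ** K"
    using gain_matrix_mult_Kgain[OF assms(2), of A C L'] unfolding Bt_def
    by (simp add: matrix_diff_ldistrib matrix_add_rdistrib)
  also have "\<dots> = Bt ** (P' - P) ** (Atil A C L - B ** K) - Bt ** P' ** C ** (L' - L)"
    unfolding RuK Atil' by (simp add: matrix_diff_ldistrib matrix_diff_rdistrib matrix_mul_assoc)
  finally show ?thesis unfolding Bt_def K_def .
qed

lemma Kgain_perturbation_bound:
  fixes B :: "real^'m^'d" and C :: "real^'c^'d" and Ru :: "real^'m^'m"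
  assumes "posdef Ru" and "psd P" and "psd P'"
  shows "mnorm (Kgain A B C Ru P' L' - Kgain A B C Ru P L)
    \<le> mnorm B * (mnorm (P' - P) * mnorm (Atil A C L - B ** Kgain A B C Ru P L)
                  + mnorm P' * mnorm C * mnorm (L' - L)) / sigma_min Ru"
proof -
  have s: "0 < sigma_min Ru" by (rule posdef_sigma_min(1)[OF assms(1)])
  note below = gain_matrix_bounded_below[OF assms(1)]
  have "mnorm (Kgain A B C Ru P' L' - Kgain A B C Ru P L)
      \<le> mnorm ((Ru + transpose B ** P' ** B) ** (Kgain A B C Ru P' L' - Kgain A B C Ru P L)) / sigma_min Ru"
    by (rule mnorm_le_mnorm_mult_divide[OF s below[OF assms(3)]])
  also have "\<dots> \<le> mnorm B * (mnorm (P' - P) * mnorm (Atil A C L - B ** Kgain A B C Ru P L)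
                  + mnorm P' * mnorm C * mnorm (L' - L)) / sigma_min Ru"
  proof (rule divide_right_mono[OF _ less_imp_le[OF s]])
    let ?E = "Atil A C L - B ** Kgain A B C Ru P L"
    have "mnorm (transpose B ** P' ** C ** (L' - L)) \<le> mnorm (transpose B ** P' ** C) * mnorm (L' - L)"
      by (rule mnorm_mult_le)
    also have "\<dots> \<le> mnorm B * mnorm P' * mnorm C * mnorm (L' - L)"
      using mnorm_mult3_le[of "transpose B" P' C] by (simp add: mnorm_transpose mult_right_mono mnorm_nonneg)
    finally have "mnorm (transpose B ** (P' - P) ** ?E) + mnorm (transpose B ** P' ** C ** (L' - L))
        \<le> mnorm B * (mnorm (P' - P) * mnorm ?E + mnorm P' * mnorm C * mnorm (L' - L))"
      using mnorm_mult3_le[of "transpose B" "P' - P" ?E] by (simp add: mnorm_transpose algebra_simps)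
    then show "mnorm ((Ru + transpose B ** P' ** B) ** (Kgain A B C Ru P' L' - Kgain A B C Ru P L))
      \<le> mnorm B * (mnorm (P' - P) * mnorm ?E + mnorm P' * mnorm C * mnorm (L' - L))"
      unfolding Kgain_difference_identity[OF invertible_if_bounded_below[OF s below[OF assms(2)]]
                                             invertible_if_bounded_below[OF s below[OF assms(3)]]]
      by (rule order_trans[OF mnorm_diff_le])
  qed
  finally show ?thesis .
qed

lemma Kgain_lipschitz_of_solution_lipschitz:
  fixes A P P' :: "real^'d^'d" and B :: "real^'m^'d" and C :: "real^'c^'d" and Ru :: "real^'m^'m"
    and L L' :: "real^'d^'c" and k :: real
  defines "E \<equiv> Atil A C L - B ** Kgain A B C Ru P L"
  assumes "posdef Ru" and "psd P" and "psd P'"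
    and dP: "mnorm (P' - P) \<le> k * mnorm (L' - L)"
    and small: "k * mnorm (L' - L) * mnorm C \<le> k * mnorm E + mnorm P * mnorm C"
  shows "mnorm (Kgain A B C Ru P' L' - Kgain A B C Ru P L)
    \<le> 2 * mnorm B * (k * mnorm E + mnorm P * mnorm C) / sigma_min Ru * mnorm (L' - L)"
proof -
  define dL X where "dL = mnorm (L' - L)" and "X = k * mnorm E + mnorm P * mnorm C"
  have dL: "0 \<le> dL" unfolding dL_def by (rule mnorm_nonneg)
  have "mnorm P' \<le> mnorm P + k * dL"
    using mnorm_add_le[of P "P' - P"] dP unfolding dL_def by simp
  then have "mnorm P' * mnorm C * dL \<le> (mnorm P + k * dL) * mnorm C * dL"
    using dL by (intro mult_right_mono mnorm_nonneg)
  moreover have "mnorm (P' - P) * mnorm E \<le> k * dL * mnorm E"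
    using mult_right_mono[OF dP mnorm_nonneg] unfolding dL_def .
  ultimately have "mnorm (P' - P) * mnorm E + mnorm P' * mnorm C * dL \<le> dL * (X + k * dL * mnorm C)"
    unfolding X_def by (simp add: algebra_simps)
  also have "\<dots> \<le> 2 * X * dL"
    using mult_left_mono[OF small dL] unfolding dL_def X_def by (simp add: algebra_simps)
  finally have "mnorm B * (mnorm (P' - P) * mnorm E + mnorm P' * mnorm C * dL) / sigma_min Ru
      \<le> mnorm B * (2 * X * dL) / sigma_min Ru"
    using posdef_sigma_min(1)[OF \<open>posdef Ru\<close>] by (intro divide_right_mono mult_left_mono mnorm_nonneg) auto
  also have "\<dots> = 2 * mnorm B * X / sigma_min Ru * dL" by simp
  finally show ?thesis
    using Kgain_perturbation_bound[OF \<open>posdef Ru\<close> \<open>psd P\<close> \<open>psd P'\<close>, where A = A and B = B and C = C and L = L and L' = L']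
    unfolding E_def dL_def X_def by linarith
qed

theorem mainTheorem17:
  fixes A Q :: "real^'d^'d" and B :: "real^'m1^'d" and C :: "real^'m2^'d"
    and Ru :: "real^'m1^'m1" and Rv :: "real^'m2^'m2"
    and Ps :: "real^'d^'d" and \<zeta> BL BP :: real
    and Pstar :: "real^'d^'m2 \<Rightarrow> real^'d^'d"
    and L L' :: "real^'d^'m2"
  assumes Q: "posdef Q" and Ru: "posdef Ru" and Rv: "posdef Rv"
    and Ps: "gare_min_pd_sol A B C Q Ru Rv Ps"
    and RvC: "posdef (Rv - transpose C ** Ps ** C)"
    and Lst: "posdef (Q - transpose (Lstar A B C Ru Rv Ps) ** Rv ** Lstar A B C Ru Rv Ps)"
    and zeta: "0 < \<zeta>" "\<zeta> < sigma_min (Q - transpose (Lstar A B C Ru Rv Ps) ** Rv ** Lstar A B C Ru Rv Ps)"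
    and Pstar: "\<forall>M \<in> Omega Q Rv \<zeta>. stab_sol_L A B C Q Ru Rv M (Pstar M)"
    and BLpos: "BL > 0" and BPpos: "BP > 0"
    and lip: "\<forall>M \<in> Omega Q Rv \<zeta>. \<forall>M' \<in> Omega Q Rv \<zeta>. mnorm (M' - M) \<le> BL \<longrightarrow>
                 mnorm (Pstar M' - Pstar M) \<le> BP * mnorm (M' - M)"
    and B0: "B \<noteq> 0" and C0: "C \<noteq> 0"
    and L: "L \<in> Omega Q Rv \<zeta>" and L': "L' \<in> Omega Q Rv \<zeta>"
    and close: "mnorm (L' - L) \<le> min BL
       (mnorm B * (BP * mnorm (Atil A C L - B ** Kgain A B C Ru (Pstar L) L) + mnorm (Pstar L) * mnorm C)
        / (BP * mnorm B * mnorm C))"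
  shows "mnorm (Kgain A B C Ru (Pstar L') L' - Kgain A B C Ru (Pstar L) L)
     \<le> 2 * mnorm B * (BP * mnorm (Atil A C L - B ** Kgain A B C Ru (Pstar L) L) + mnorm (Pstar L) * mnorm C)
        / sigma_min Ru * mnorm (L' - L)"
proof -
  define P P' dL where "P = Pstar L" and "P' = Pstar L'" and "dL = mnorm (L' - L)"
  define X where "X = BP * mnorm (Atil A C L - B ** Kgain A B C Ru P L) + mnorm P * mnorm C"
  have psd: "psd P" "psd P'"
    using Pstar L L' unfolding P_def P'_def stab_sol_L_def by (auto intro: posdef_imp_psd)
  have "dL \<le> BL" and "dL \<le> X / (BP * mnorm C)"
    using close mnorm_pos[OF B0] unfolding dL_def X_def P_def by simp_all
  then have "mnorm (P' - P) \<le> BP * dL" and "BP * dL * mnorm C \<le> X"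
    using lip L L' mnorm_pos[OF C0] BPpos
    unfolding P_def P'_def dL_def by (simp_all add: pos_le_divide_eq mult.commute mult.left_commute)
  from Kgain_lipschitz_of_solution_lipschitz[OF Ru psd this[unfolded dL_def X_def]]
  show ?thesis unfolding P_def P'_def .
qed

end
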